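(* For all integers $n,m\ge 1$, letting $K_{n,m}$ be the complete bipartite graph with parts of sizes $n$ and $m$: ${\rm I}_e(K_{n,m})=0$ if $n\ne m$, and ${\rm I}_e(K_{n,n})=n$.
   Context: All graphs are finite and simple. A graph is locally irregular if no two adjacent vertices have the same degree. An edge-irregulator of a graph $G$ is a set $S\subseteq E(G)$ such that $G-S$ is locally irregular; ${\rm I}_e(G)$ is the minimum cardinality of an edge-irregulator of $G$. *)

theory Defs
  imports Main
begin

(* A finite simple graph is represented by its edge set: a set of 2-element
   vertex sets. (Isolated vertices do not affect local irregularity or I_e.) *)

definition degree :: "'a set set \<Rightarrow> 'a \<Rightarrow> nat" where
  "degree E v = card {e \<in> E. v \<in> e}"

definition locally_irregular :: "'a set set \<Rightarrow> bool" where
  "locally_irregular E \<longleftrightarrow> (\<forall>u v. {u, v} \<in> E \<longrightarrow> u \<noteq> v \<longrightarrow> degree E u \<noteq> degree E v)"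

definition edge_irregulator :: "'a set set \<Rightarrow> 'a set set \<Rightarrow> bool" where
  "edge_irregulator E S \<longleftrightarrow> S \<subseteq> E \<and> locally_irregular (E - S)"

(* minimum cardinality of an edge-irregulator (every finite graph has one: S = E) *)
definition irr_e :: "'a set set \<Rightarrow> nat" where
  "irr_e E = (LEAST k. \<exists>S. edge_irregulator E S \<and> card S = k)"

definition K_bip :: "nat \<Rightarrow> nat \<Rightarrow> (nat + nat) set set" where
  "K_bip n m = {{Inl i, Inr j} | i j. i < n \<and> j < m}"

end

theory Submission
  imports Defs
begin

text \<open>If the parts of a complete bipartite graph have different sizes, adjacent vertices
  have different degrees, so no edge needs to be removed. For \<open>K\<^sub>n\<^sub>,\<^sub>n\<close>,
  deleting the \<open>n\<close> edges at one vertex leaves \<open>K\<^sub>n\<^sub>-\<^sub>1\<^sub>,\<^sub>n\<close>, which is locally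
  irregular. Conversely, fewer than \<open>n\<close> removed edges miss some vertex \<open>u\<close> on the left and
  some vertex \<open>v\<close> on the right; the edge \<open>uv\<close> survives and both its endpoints keep
  degree \<open>n\<close>.\<close>

fun bip_edge :: "'a \<times> 'b \<Rightarrow> ('a + 'b) set" where
  "bip_edge (a, c) = {Inl a, Inr c}"

definition bip_graph :: "'a set \<Rightarrow> 'b set \<Rightarrow> ('a + 'b) set set" where
  "bip_graph A C = bip_edge ` (A \<times> C)"

lemma inj_bip_edge: "inj bip_edge"
  by (auto simp: inj_def doubleton_eq_iff)

lemma K_bip_eq_bip_graph: "K_bip n m = bip_graph {..<n} {..<m}"
  unfolding K_bip_def bip_graph_def by (auto simp: image_iff; blast)

lemma bip_graph_Diff_left: "bip_graph A C - bip_graph A' C = bip_graph (A - A') C"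
  unfolding bip_graph_def
  by (simp add: image_set_diff[OF inj_bip_edge, symmetric] Times_Diff_distrib1)

lemma card_bip_graph: "card (bip_graph A C) = card A * card C"
  unfolding bip_graph_def
  by (simp add: card_image inj_on_subset[OF inj_bip_edge] card_cartesian_product)

lemma degree_bip_graph_Inl:
  "degree (bip_graph A C) (Inl a) = (if a \<in> A then card C else 0)"
proof -
  have "{e \<in> bip_graph A C. Inl a \<in> e} = (if a \<in> A then bip_graph {a} C else {})"
    unfolding bip_graph_def by auto
  then show ?thesis
    by (simp add: degree_def card_bip_graph)
qed

lemma degree_bip_graph_Inr:
  "degree (bip_graph A C) (Inr c) = (if c \<in> C then card A else 0)"
proof -
  have "{e \<in> bip_graph A C. Inr c \<in> e} = (if c \<in> C then bip_graph A {c} else {})"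
    unfolding bip_graph_def by auto
  then show ?thesis
    by (simp add: degree_def card_bip_graph)
qed

lemma locally_irregular_bip_graph:
  assumes "card A \<noteq> card C"
  shows "locally_irregular (bip_graph A C)"
  unfolding locally_irregular_def
proof (intro allI impI)
  fix u v
  assume "{u, v} \<in> bip_graph A C" "u \<noteq> v"
  then obtain a c where "a \<in> A" "c \<in> C" "{u, v} = {Inl a, Inr c}"
    unfolding bip_graph_def by auto
  then have "{degree (bip_graph A C) u, degree (bip_graph A C) v} = {card C, card A}"
    by (auto simp: doubleton_eq_iff degree_bip_graph_Inl degree_bip_graph_Inr)
  then show "degree (bip_graph A C) u \<noteq> degree (bip_graph A C) v"
    using assms by (auto simp: doubleton_eq_iff)
qed

lemma degree_Diff_avoiding:
  assumes "\<forall>e\<in>S. v \<notin> e"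
  shows "degree (E - S) v = degree E v"
  unfolding degree_def using assms by (metis Diff_iff)

lemma irr_e_eqI:
  assumes "edge_irregulator E S"
    and "\<And>T. edge_irregulator E T \<Longrightarrow> card S \<le> card T"
  shows "irr_e E = card S"
  unfolding irr_e_def using assms by (intro Least_equality) auto

lemma irr_e_eq_0_if_locally_irregular:
  assumes "locally_irregular E"
  shows "irr_e E = 0"
proof -
  have "edge_irregulator E {}"
    using assms by (simp add: edge_irregulator_def)
  then show ?thesis
    using irr_e_eqI by fastforce
qed

text \<open>The edges of \<open>S\<close> are \<open>bip_edge ` P\<close> for a set \<open>P\<close> of vertex pairs with
  \<open>card P = card S\<close>, so \<open>S\<close> touches at most \<open>card S\<close> vertices on either side.\<close>

lemma card_le_edge_irregulator_bip_graph:
  assumes fin: "finite A" "finite C" and balanced: "card A = card C"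
    and irr: "edge_irregulator (bip_graph A C) S"
  shows "card A \<le> card S"
proof (rule ccontr)
  assume "\<not> card A \<le> card S"
  define P where "P = bip_edge -` S"
  have S_sub: "S \<subseteq> bip_graph A C" and li: "locally_irregular (bip_graph A C - S)"
    using irr by (auto simp: edge_irregulator_def)
  have S_eq: "S = bip_edge ` P" and P_sub: "P \<subseteq> A \<times> C"
    using S_sub inj_bip_edge unfolding P_def bip_graph_def by (auto dest: injD)
  have "finite P"
    using P_sub fin by (meson finite_SigmaI finite_subset)
  have "card P = card S"
    unfolding S_eq by (simp add: card_image inj_on_subset[OF inj_bip_edge])
  then have "card (fst ` P) < card A" "card (snd ` P) < card C"
    using \<open>\<not> card A \<le> card S\<close> balanced card_image_le[OF \<open>finite P\<close>]
    by (metis le_less_trans not_le)+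
  then obtain a c where a: "a \<in> A" "a \<notin> fst ` P" and c: "c \<in> C" "c \<notin> snd ` P"
    using card_mono[OF finite_imageI[OF \<open>finite P\<close>]] by (metis not_le subsetI)
  have avoid_a: "\<forall>e\<in>S. Inl a \<notin> e" and avoid_c: "\<forall>e\<in>S. Inr c \<notin> e"
    using a(2) c(2) unfolding S_eq by force+
  have "bip_edge (a, c) \<in> bip_graph A C"
    unfolding bip_graph_def using a(1) c(1) by (intro imageI) simp
  moreover have "bip_edge (a, c) \<notin> S"
    using avoid_a by auto
  ultimately have "degree (bip_graph A C - S) (Inl a) \<noteq> degree (bip_graph A C - S) (Inr c)"
    using li unfolding locally_irregular_def by simp
  then show False
    using a c balanced
    by (simp add: degree_Diff_avoiding[OF avoid_a] degree_Diff_avoiding[OF avoid_c]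
        degree_bip_graph_Inl degree_bip_graph_Inr)
qed

lemma irr_e_balanced_bip_graph:
  assumes "finite A" "a \<in> A" "card A = card C"
  shows "irr_e (bip_graph A C) = card A"
proof -
  have "card C > 0"
    using assms card_gt_0_iff by fastforce
  then have "finite C"
    using card_gt_0_iff by blast
  have "card (A - {a}) \<noteq> card C"
    using assms \<open>card C > 0\<close> by (simp add: card_Diff_singleton)
  then have "locally_irregular (bip_graph A C - bip_graph {a} C)"
    unfolding bip_graph_Diff_left by (rule locally_irregular_bip_graph)
  moreover have "bip_graph {a} C \<subseteq> bip_graph A C"
    using assms(2) by (auto simp: bip_graph_def)
  ultimately have "edge_irregulator (bip_graph A C) (bip_graph {a} C)"
    by (simp add: edge_irregulator_def)
  moreover have "card (bip_graph {a} C) = card A"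
    using assms by (simp add: card_bip_graph)
  ultimately show ?thesis
    using irr_e_eqI card_le_edge_irregulator_bip_graph[OF assms(1) \<open>finite C\<close> assms(3)]
    by metis
qed

theorem theorem5:
  fixes n m :: nat
  assumes "n \<ge> 1" and "m \<ge> 1"
  shows "(n \<noteq> m \<longrightarrow> irr_e (K_bip n m) = 0) \<and> irr_e (K_bip n n) = n"
proof
  show "n \<noteq> m \<longrightarrow> irr_e (K_bip n m) = 0"
    by (simp add: K_bip_eq_bip_graph locally_irregular_bip_graph irr_e_eq_0_if_locally_irregular)
  have "0 \<in> {..<n}"
    using assms(1) by simp
  then show "irr_e (K_bip n n) = n"
    using irr_e_balanced_bip_graph[of "{..<n}" 0 "{..<n}"] by (simp add: K_bip_eq_bip_graph)
qed

end
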